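(* On $\mathbb{R}^3$ with coordinates $(x,y,z)$ (the universal cover of the isometry group $E(2)$ of the Euclidean plane, with its left-invariant structure), consider the Lorentzian metric $$g_1 = (\sin y\,dx + \cos y\,dz)^2 + dy^2 - (\cos y\,dx - \sin y\,dz)^2 .$$ Let $F_1 = \sin y\,\partial_x + \cos y\,\partial_z$, $F_2 = \partial_y$, $F_3 = \cos y\,\partial_x - \sin y\,\partial_z$, and let $$X = 2(z\cos y + x\sin y)\,F_1 + 2(x\cos y - z\sin y)\,F_3 .$$ Then $$2\,\mathrm{Ric}[g_1] + L_X g_1 - 4\,g_1 = 0 ,$$ and there is no smooth function $f$ on $\mathbb{R}^3$ with $X = \nabla f$ (gradient with respect to $g_1$). Hence $g_1$ is a shrinking non-gradient Lorentzian Ricci soliton.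
   Context: For a pseudo-Riemannian metric $g$ on a manifold $M$, a vector field $X$ and a constant $\alpha$, $(M,g,X,\alpha)$ is a Ricci soliton structure if $2\,\mathrm{Ric}[g] + L_X g + \alpha g = 0$, where $L_X$ denotes the Lie derivative. The soliton is called shrinking, steady, or expanding according as $\alpha<0$, $\alpha=0$, or $\alpha>0$. It is called gradient if $X=\nabla f$ for some function $f$, and non-gradient if $X\neq \nabla f$ for every function $f$. *)

theory Defs
  imports "HOL-Analysis.Analysis"
begin

text \<open>Coordinates on R^3: a point p :: real^3 has coordinates x = p$1, y = p$2, z = p$3.
  Tensor fields are given by their components in the coordinate frame
  (d/dx, d/dy, d/dz), indexed by the type 3.  A metric is a map
  g :: real^3 \<Rightarrow> 3 \<Rightarrow> 3 \<Rightarrow> real, a vector field a map X :: real^3 \<Rightarrow> real^3.\<close>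

definition partial :: "3 \<Rightarrow> (real^3 \<Rightarrow> real) \<Rightarrow> real^3 \<Rightarrow> real" where
  "partial i h p = deriv (\<lambda>t. h (p + t *\<^sub>R axis i 1)) 0"

definition inv_metric :: "(real^3 \<Rightarrow> 3 \<Rightarrow> 3 \<Rightarrow> real) \<Rightarrow> real^3 \<Rightarrow> 3 \<Rightarrow> 3 \<Rightarrow> real" where
  "inv_metric g p i j = matrix_inv (\<chi> a b. g p a b) $ i $ j"

definition christoffel :: "(real^3 \<Rightarrow> 3 \<Rightarrow> 3 \<Rightarrow> real) \<Rightarrow> 3 \<Rightarrow> 3 \<Rightarrow> 3 \<Rightarrow> real^3 \<Rightarrow> real" where
  "christoffel g k i j p = (1/2) * (\<Sum>l\<in>UNIV. inv_metric g p k l *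
      (partial i (\<lambda>q. g q j l) p + partial j (\<lambda>q. g q i l) p - partial l (\<lambda>q. g q i j) p))"

definition ricci :: "(real^3 \<Rightarrow> 3 \<Rightarrow> 3 \<Rightarrow> real) \<Rightarrow> 3 \<Rightarrow> 3 \<Rightarrow> real^3 \<Rightarrow> real" where
  "ricci g i j p =
     (\<Sum>k\<in>UNIV. partial k (christoffel g k i j) p - partial j (christoffel g k k i) p)
   + (\<Sum>k\<in>UNIV. \<Sum>l\<in>UNIV. christoffel g k k l p * christoffel g l i j p
                           - christoffel g k j l p * christoffel g l k i p)"

definition lie_deriv_metric :: "(real^3 \<Rightarrow> real^3) \<Rightarrow> (real^3 \<Rightarrow> 3 \<Rightarrow> 3 \<Rightarrow> real) \<Rightarrow> 3 \<Rightarrow> 3 \<Rightarrow> real^3 \<Rightarrow> real" where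
  "lie_deriv_metric X g i j p =
     (\<Sum>k\<in>UNIV. X p $ k * partial k (\<lambda>q. g q i j) p
               + g p k j * partial i (\<lambda>q. X q $ k) p
               + g p i k * partial j (\<lambda>q. X q $ k) p)"

definition grad :: "(real^3 \<Rightarrow> 3 \<Rightarrow> 3 \<Rightarrow> real) \<Rightarrow> (real^3 \<Rightarrow> real) \<Rightarrow> real^3 \<Rightarrow> real^3" where
  "grad g f p = (\<chi> i. \<Sum>j\<in>UNIV. inv_metric g p i j * partial j f p)"

definition ricci_soliton :: "(real^3 \<Rightarrow> 3 \<Rightarrow> 3 \<Rightarrow> real) \<Rightarrow> (real^3 \<Rightarrow> real^3) \<Rightarrow> real \<Rightarrow> bool" where
  "ricci_soliton g X \<alpha> \<longleftrightarrow>
     (\<forall>p i j. 2 * ricci g i j p + lie_deriv_metric X g i j p + \<alpha> * g p i j = 0)"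

definition is_gradient_field :: "(real^3 \<Rightarrow> 3 \<Rightarrow> 3 \<Rightarrow> real) \<Rightarrow> (real^3 \<Rightarrow> real^3) \<Rightarrow> bool" where
  "is_gradient_field g X \<longleftrightarrow>
     (\<exists>f. (\<forall>p. f differentiable (at p)) \<and> (\<forall>p. X p = grad g f p))"

definition theta1 :: "real^3 \<Rightarrow> real^3" where
  "theta1 p = vector [sin (p$2), 0, cos (p$2)]"
definition theta2 :: "real^3 \<Rightarrow> real^3" where
  "theta2 p = vector [0, 1, 0]"
definition theta3 :: "real^3 \<Rightarrow> real^3" where
  "theta3 p = vector [cos (p$2), 0, - sin (p$2)]"

definition g1 :: "real^3 \<Rightarrow> 3 \<Rightarrow> 3 \<Rightarrow> real" where
  "g1 p i j = theta1 p $ i * theta1 p $ j + theta2 p $ i * theta2 p $ j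
              - theta3 p $ i * theta3 p $ j"

definition F1 :: "real^3 \<Rightarrow> real^3" where
  "F1 p = vector [sin (p$2), 0, cos (p$2)]"
definition F2 :: "real^3 \<Rightarrow> real^3" where
  "F2 p = vector [0, 1, 0]"
definition F3 :: "real^3 \<Rightarrow> real^3" where
  "F3 p = vector [cos (p$2), 0, - sin (p$2)]"

definition X1 :: "real^3 \<Rightarrow> real^3" where
  "X1 p = (2 * (p$3 * cos (p$2) + p$1 * sin (p$2))) *\<^sub>R F1 p
        + (2 * (p$1 * cos (p$2) - p$3 * sin (p$2))) *\<^sub>R F3 p"

end

theory Submission
  imports Defs
begin

text \<open>In coordinates the matrix of \<open>g1\<close> is
  \<open>G(y) = [[-cos 2y, 0, sin 2y], [0, 1, 0], [sin 2y, 0, cos 2y]]\<close>, which depends on \<open>y\<close> only and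
  satisfies \<open>G(y)\<^sup>2 = 1\<close>; so the inverse metric is \<open>G\<close> itself and the Christoffel symbols and
  the Ricci tensor \<open>Ric = 2 dy\<^sup>2\<close> are computed explicitly. In coordinates
  \<open>X = 2x \<partial>\<^sub>x + 2z \<partial>\<^sub>z\<close>, so \<open>(L\<^sub>X g)\<^sub>i\<^sub>j = (c\<^sub>i + c\<^sub>j) g\<^sub>i\<^sub>j\<close> with \<open>c = (2, 0, 2)\<close>,
  and the soliton equation follows entrywise.

  If \<open>X = \<nabla>f\<close> then \<open>df = G X\<close>, i.e. \<open>\<partial>\<^sub>y f = 0\<close> and \<open>\<partial>\<^sub>x f = -2x cos 2y\<close> on the plane \<open>z = 0\<close>.
  Integrating in \<open>x\<close> gives \<open>f(1,y,0) - f(0,y,0) = -cos 2y\<close>, whereas \<open>\<partial>\<^sub>y f = 0\<close> makes this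
  difference independent of \<open>y\<close>: compare \<open>y = 0\<close> and \<open>y = \<pi>/2\<close>.\<close>

lemma has_real_derivative_along_axis:
  assumes h': "(h has_derivative h') (at (p + t *\<^sub>R axis i 1))"
  shows "((\<lambda>s. h (p + s *\<^sub>R axis i 1)) has_real_derivative h' (axis i 1)) (at t)"
proof -
  have "((\<lambda>s. p + s *\<^sub>R axis i 1) has_derivative (\<lambda>s. s *\<^sub>R axis i 1)) (at t)"
    by (auto intro!: derivative_eq_intros)
  from has_derivative_compose[OF this h']
  have "((\<lambda>s. h (p + s *\<^sub>R axis i 1)) has_derivative (\<lambda>s. h' (s *\<^sub>R axis i 1))) (at t)" .
  moreover have "(\<lambda>s. h' (s *\<^sub>R axis i 1)) = (*) (h' (axis i 1))"
    using linear_cmul[OF has_derivative_linear[OF h']] by (simp add: fun_eq_iff)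
  ultimately show ?thesis
    by (simp add: has_field_derivative_def)
qed

lemma partial_eq_has_derivative:
  assumes "(h has_derivative h') (at p)"
  shows "partial i h p = h' (axis i 1)"
  using has_real_derivative_along_axis[of h h' p 0 i] assms
  unfolding partial_def by (simp add: DERIV_imp_deriv)

lemma has_real_derivative_partial_along_axis:
  assumes "\<forall>q. h differentiable (at q)"
  shows "((\<lambda>s. h (p + s *\<^sub>R axis i 1)) has_real_derivative partial i h (p + t *\<^sub>R axis i 1))
    (at t)"
proof -
  obtain h' where h': "(h has_derivative h') (at (p + t *\<^sub>R axis i 1))"
    using assms unfolding differentiable_def by blast
  show ?thesis
    unfolding partial_eq_has_derivative[OF h'] by (rule has_real_derivative_along_axis[OF h'])
qed

lemma diff_along_axis_eq_antiderivative:
  assumes "\<forall>q. h differentiable (at q)"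
    and "\<And>s. partial i h (p + s *\<^sub>R axis i 1) = \<phi>' s"
    and "\<And>s. (\<phi> has_real_derivative \<phi>' s) (at s)"
  shows "h (p + t *\<^sub>R axis i 1) - h p = \<phi> t - \<phi> 0"
proof -
  have "((\<lambda>s. h (p + s *\<^sub>R axis i 1) - \<phi> s) has_real_derivative 0) (at s)" for s
    using has_real_derivative_partial_along_axis[OF assms(1), of p i s] assms(2,3)
    by (auto intro!: derivative_eq_intros)
  from DERIV_isconst_all[OF allI[OF this], of t 0] show ?thesis by simp
qed

lemma partial_fun_of_coordinate:
  assumes "\<And>t. (\<phi> has_real_derivative \<phi>' t) (at t)"
  shows "partial k (\<lambda>q. \<phi> (q$m)) p = (if k = m then \<phi>' (p$m) else 0)"
proof -
  have "((\<lambda>q. q$m) has_derivative (\<lambda>v. v$m)) (at p)"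
    by (rule bounded_linear_imp_has_derivative[OF bounded_linear_vec_nth])
  from has_derivative_compose[OF this, of \<phi> "\<lambda>x. x * \<phi>' (p$m)"]
  have "((\<lambda>q. \<phi> (q$m)) has_derivative (\<lambda>v. v$m * \<phi>' (p$m))) (at p)"
    using assms by (simp add: has_field_derivative_def mult_commute_abs)
  then show ?thesis by (simp add: partial_eq_has_derivative axis_def)
qed

lemma matrix_inv_unique:
  fixes A B :: "'a::comm_ring_1^'n^'n"
  assumes AB: "A ** B = mat 1" and BA: "B ** A = mat 1"
  shows "matrix_inv A = B"
proof -
  let ?C = "matrix_inv A"
  have "?C ** A = mat 1"
    unfolding matrix_inv_def
    using someI_ex[of "\<lambda>C. A ** C = mat 1 \<and> C ** A = mat 1"] AB BA by blast
  have "?C = ?C ** (A ** B)"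
    using AB by (simp add: matrix_mul_rid)
  also have "\<dots> = (?C ** A) ** B"
    by (simp add: matrix_mul_assoc)
  also have "\<dots> = B"
    using \<open>?C ** A = mat 1\<close> by (simp add: matrix_mul_lid)
  finally show ?thesis .
qed

definition g1_coeff :: "real \<Rightarrow> real^3^3" where
  "g1_coeff y = vector [vector [- cos (2*y), 0, sin (2*y)],
                        vector [0, 1, 0],
                        vector [sin (2*y), 0, cos (2*y)]]"

definition g1_coeff_deriv :: "real \<Rightarrow> real^3^3" where
  "g1_coeff_deriv y = vector [vector [2 * sin (2*y), 0, 2 * cos (2*y)],
                              vector [0, 0, 0],
                              vector [2 * cos (2*y), 0, - 2 * sin (2*y)]]"

text \<open>\<open>g1_christoffel y $ k $ i $ j\<close> is \<open>\<Gamma>\<^sup>k\<^sub>i\<^sub>j\<close> at height \<open>y\<close>.\<close>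

definition g1_christoffel :: "real \<Rightarrow> real^3^3^3" where
  "g1_christoffel y = vector
     [vector [vector [0, 0, 0], vector [0, 0, -1], vector [0, -1, 0]],
      vector [vector [- sin (2*y), 0, - cos (2*y)],
              vector [0, 0, 0],
              vector [- cos (2*y), 0, sin (2*y)]],
      vector [vector [0, 1, 0], vector [1, 0, 0], vector [0, 0, 0]]]"

definition g1_christoffel_deriv :: "real \<Rightarrow> real^3^3^3" where
  "g1_christoffel_deriv y = vector
     [0,
      vector [vector [- 2 * cos (2*y), 0, 2 * sin (2*y)],
              vector [0, 0, 0],
              vector [2 * sin (2*y), 0, 2 * cos (2*y)]],
      0]"

lemma g1_eq_coeff: "g1 p i j = g1_coeff (p$2) $ i $ j"
  using exhaust_3[of i] exhaust_3[of j]
  by (auto simp: g1_def g1_coeff_def theta1_def theta2_def theta3_def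
      cos_double sin_double power2_eq_square)

lemma has_real_derivative_g1_coeff:
  "((\<lambda>y. g1_coeff y $ i $ j) has_real_derivative g1_coeff_deriv t $ i $ j) (at t)"
  using exhaust_3[of i] exhaust_3[of j]
  by (auto simp: g1_coeff_def g1_coeff_deriv_def intro!: derivative_eq_intros)

lemma has_real_derivative_g1_christoffel:
  "((\<lambda>y. g1_christoffel y $ k $ i $ j) has_real_derivative g1_christoffel_deriv t $ k $ i $ j)
    (at t)"
  using exhaust_3[of k] exhaust_3[of i] exhaust_3[of j]
  by (auto simp: g1_christoffel_def g1_christoffel_deriv_def intro!: derivative_eq_intros)

lemma partial_g1:
  "partial k (\<lambda>q. g1 q i j) p = (if k = 2 then g1_coeff_deriv (p$2) $ i $ j else 0)"
  unfolding g1_eq_coeff by (rule partial_fun_of_coordinate[OF has_real_derivative_g1_coeff])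

lemma g1_coeff_involution: "g1_coeff y ** g1_coeff y = mat 1"
  by (simp add: vec_eq_iff matrix_matrix_mult_def mat_def forall_3 sum_3 g1_coeff_def
      flip: power2_eq_square)

lemma g1_eq_matrix: "(\<chi> i j. g1 p i j) = g1_coeff (p$2)"
  by (simp add: vec_eq_iff g1_eq_coeff)

lemma inv_metric_g1: "inv_metric g1 p = g1 p"
  using matrix_inv_unique[OF g1_coeff_involution g1_coeff_involution]
  by (simp add: fun_eq_iff inv_metric_def g1_eq_matrix g1_eq_coeff)

lemma christoffel_g1: "christoffel g1 k i j p = g1_christoffel (p$2) $ k $ i $ j"
proof -
  have "sin (2 * p$2) ^ 2 + cos (2 * p$2) ^ 2 = 1" by simp
  then show ?thesis
    using exhaust_3[of k] exhaust_3[of i] exhaust_3[of j]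
    unfolding christoffel_def inv_metric_g1 partial_g1 sum_3
    by (auto simp: g1_eq_coeff g1_coeff_def g1_coeff_deriv_def g1_christoffel_def
        algebra_simps power2_eq_square)
qed

lemma partial_christoffel_g1:
  "partial m (christoffel g1 k i j) p =
    (if m = 2 then g1_christoffel_deriv (p$2) $ k $ i $ j else 0)"
  unfolding christoffel_g1
  by (rule partial_fun_of_coordinate[OF has_real_derivative_g1_christoffel])

lemma ricci_g1: "ricci g1 i j p = (if i = 2 \<and> j = 2 then 2 else 0)"
  using exhaust_3[of i] exhaust_3[of j]
  unfolding ricci_def partial_christoffel_g1 christoffel_g1 sum_3
  by (auto simp: g1_christoffel_def g1_christoffel_deriv_def)

lemma X1_component: "X1 q $ k = (if k = 2 then 0 else 2) * q$k"
proof -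
  have pythagoras: "sin (q$2)^2 + cos (q$2)^2 = 1" by simp
  note X1_unfold = X1_def F1_def F3_def vector_add_component vector_scaleR_component vector_3
    real_scaleR_def
  have "X1 q $ 1 = 2 * q$1"
    unfolding X1_unfold using pythagoras by algebra
  moreover have "X1 q $ 2 = 0"
    unfolding X1_unfold by simp
  moreover have "X1 q $ 3 = 2 * q$3"
    unfolding X1_unfold using pythagoras by algebra
  ultimately show ?thesis
    using exhaust_3[of k] by auto
qed

lemma partial_X1:
  "partial m (\<lambda>q. X1 q $ k) p = (if m = k then (if k = 2 then 0 else 2) else 0)"
  unfolding X1_component
  by (rule partial_fun_of_coordinate[of "\<lambda>t. (if k = 2 then 0 else 2) * t"
        "\<lambda>_. if k = 2 then 0 else 2"])
     (auto intro!: derivative_eq_intros)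

lemma lie_deriv_metric_X1_g1:
  "lie_deriv_metric X1 g1 i j p = ((if i = 2 then 0 else 2) + (if j = 2 then 0 else 2)) * g1 p i j"
  using exhaust_3[of i] exhaust_3[of j]
  unfolding lie_deriv_metric_def partial_X1 partial_g1 sum_3
  by (auto simp: X1_component algebra_simps)

lemma ricci_soliton_g1_X1: "ricci_soliton g1 X1 (-4)"
  unfolding ricci_soliton_def ricci_g1 lie_deriv_metric_X1_g1
  by (simp add: forall_3 g1_eq_coeff g1_coeff_def)

lemma partial_eq_X1_flat:
  assumes "X1 p = grad g1 f p"
  shows "partial j f p = (\<Sum>i\<in>UNIV. g1 p j i * X1 p $ i)"
proof -
  let ?df = "\<chi> j. partial j f p"
  have "grad g1 f p = g1_coeff (p$2) *v ?df"
    by (simp add: grad_def inv_metric_g1 matrix_vector_mult_def g1_eq_coeff)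
  then have "g1_coeff (p$2) *v X1 p = ?df"
    using assms by (simp add: matrix_vector_mul_assoc g1_coeff_involution)
  then have "partial j f p = (g1_coeff (p$2) *v X1 p) $ j"
    by simp
  then show ?thesis
    by (simp add: matrix_vector_mult_def g1_eq_coeff)
qed

lemma not_gradient_field_X1: "\<not> is_gradient_field g1 X1"
proof
  assume "is_gradient_field g1 X1"
  then obtain f where diff: "\<forall>q. f differentiable (at q)"
    and grad: "\<forall>p. X1 p = grad g1 f p"
    unfolding is_gradient_field_def by blast
  have dx: "partial 1 f p = 2 * (p$3 * sin (2 * p$2) - p$1 * cos (2 * p$2))"
    and dy: "partial 2 f p = 0" for p
    using partial_eq_X1_flat[OF grad[rule_format, of p]]
    by (simp_all add: sum_3 X1_component g1_eq_coeff g1_coeff_def algebra_simps)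
  have const_y: "f (a *\<^sub>R axis 1 1 + b *\<^sub>R axis 2 1) = f (a *\<^sub>R axis 1 1)" for a b
    using diff_along_axis_eq_antiderivative[OF diff, of 2 "a *\<^sub>R axis 1 1" "\<lambda>_. 0" "\<lambda>_. 0" b]
    by (simp add: dy)
  have step_x: "f (b *\<^sub>R axis 2 1 + axis 1 1) - f (b *\<^sub>R axis 2 1) = - cos (2*b)" for b
  proof -
    have "partial 1 f (b *\<^sub>R axis 2 1 + s *\<^sub>R axis 1 1) = - 2 * s * cos (2*b)" for s
      by (simp add: dx axis_def)
    moreover have "((\<lambda>s. - s\<^sup>2 * cos (2*b)) has_real_derivative - 2 * s * cos (2*b)) (at s)" for s
      by (auto intro!: derivative_eq_intros)
    ultimately show ?thesis
      using diff_along_axis_eq_antiderivative[OF diff, of 1 "b *\<^sub>R axis 2 1"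
          "\<lambda>s. - 2 * s * cos (2*b)" "\<lambda>s. - s\<^sup>2 * cos (2*b)" 1]
      by simp
  qed
  have "- cos (2*b) = f (axis 1 1) - f 0" for b
    using step_x[of b] const_y[of 1 b] const_y[of 0 b] by (simp add: add.commute)
  from this[of 0] this[of "pi/2"] show False by simp
qed

theorem theorem4p1:
  shows "ricci_soliton g1 X1 (-4) \<and> \<not> is_gradient_field g1 X1"
  using ricci_soliton_g1_X1 not_gradient_field_X1 by blast

end
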